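(* Under the setting below, let $\rho^*$ be the limit of a subsequence $(\rho^{(\epsilon_n)})$, $\epsilon_n\downarrow0$, converging weakly in $L^2([0,T_m];H^m(\mathbb T^d))$ and strongly in $L^\infty([0,T_m];H^{m'}(\mathbb T^d))$ for some $d/2<m'<m$. Then $t\mapsto\|\rho^*(t)\|_{H^m}$ is right-continuous at $t=0$, with $\lim_{t\downarrow0}\|\rho^*(t)\|_{H^m}=\|\rho_0\|_{H^m}=\|\rho^*(0)\|_{H^m}$.
   Context: Torus $\mathbb T^d$, $H^m=H^m(\mathbb T^d)$. Data: $\kappa,\eta,\omega,\gamma:\mathbb T^d\to\mathbb R$, $\tau:\mathbb T^d\times\mathbb T^d\to\mathbb R$ smooth, $0\le\kappa\le1$, $\eta,\omega,\gamma,\tau\ge0$, $\int\tau(y,x)dx=1$, all derivatives bounded; $\delta>0$, $0<u^-<u^+<1$, $\tilde\rho>0$. $M(r)=\frac{u^-r}{1+r/\tilde\rho}$, $u(\kappa,\rho)=u^+-\kappa\frac{u^-}{1+\rho/\tilde\rho}$, $I[q](x)=\int\tau(y,x)q(y)dy$, $\mathcal J^{(\epsilon)}[f](x)=\sum_{k\in\mathbb Z^d}e^{-\epsilon|k|^2+2\pi ik\cdot x}\hat f(k)$. Fix an integer $m>d+3$ and $\rho_0\in H^m$ with $\underline\rho_0=\operatorname{ess\,inf}\rho_0>0$. For $\epsilon>0$, $\rho^{(\epsilon)}$ is the solution of the regularized equation $\rho_t=\delta\mathcal J^{(\epsilon)}[\Delta(u^+\mathcal J^{(\epsilon)}[\rho]-\kappa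 M(\mathcal J^{(\epsilon)}[\rho]))]+\eta-\omega\rho+I[\gamma\rho u(\kappa,\rho)]-\gamma\rho u(\kappa,\rho)$, $\rho(0)=\rho_0$. $T_m>0$ is a time independent of $\epsilon$ such that every $\rho^{(\epsilon)}$ exists in $\mathcal C^1([0,T_m];H^m)$, $\sup_{\epsilon>0,t\in[0,T_m]}\|\rho^{(\epsilon)}(t)\|_{H^m}<\infty$, $\rho^{(\epsilon)}\ge\underline\rho_0/2$, and $\tfrac12\|\rho^{(\epsilon)}(t)\|^2_{H^m}\le E_m(t)$ for a continuous $\epsilon$-independent $E_m$ with $E_m(0)=\tfrac12\|\rho_0\|^2_{H^m}$. *)

theory Defs
  imports "HOL-Analysis.Analysis"
begin

text \<open>The torus T^d is represented by the unit cube [0,1]^d in real^'d; functions on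
 the torus are functions real^'d => real, only their values on the cube (up to null sets)
 matter for the Sobolev structure. d = CARD('d).\<close>

definition tcube :: "(real^'d) set" where
  "tcube = cbox 0 One"

definition tmeas :: "(real^'d) measure" where
  "tmeas = lebesgue_on tcube"

definition kdot :: "('d::finite \<Rightarrow> int) \<Rightarrow> real^'d \<Rightarrow> real" where
  "kdot k x = (\<Sum>i\<in>UNIV. of_int (k i) * x $ i)"

definition knorm2 :: "('d::finite \<Rightarrow> int) \<Rightarrow> real" where
  "knorm2 k = (\<Sum>i\<in>UNIV. (of_int (k i))^2)"

definition fc :: "(real^'d \<Rightarrow> real) \<Rightarrow> ('d::finite \<Rightarrow> int) \<Rightarrow> complex" where
  "fc f k = integral\<^sup>L tmeas (\<lambda>x. complex_of_real (f x) * cis (- 2 * pi * kdot k x))"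

definition in_L2 :: "(real^'d::finite \<Rightarrow> real) \<Rightarrow> bool" where
  "in_L2 f \<longleftrightarrow> f \<in> borel_measurable tmeas \<and> integrable tmeas (\<lambda>x. (f x)^2)"

definition hs_sq :: "real \<Rightarrow> (real^'d::finite \<Rightarrow> real) \<Rightarrow> ennreal" where
  "hs_sq s f = (\<Sum>\<^sub>\<infinity>k. ennreal ((1 + 4 * pi^2 * knorm2 k) powr s * (cmod (fc f k))^2))"

definition in_Hs :: "real \<Rightarrow> (real^'d::finite \<Rightarrow> real) \<Rightarrow> bool" where
  "in_Hs s f \<longleftrightarrow> in_L2 f \<and> hs_sq s f < \<infinity>"

definition hs_norm :: "real \<Rightarrow> (real^'d::finite \<Rightarrow> real) \<Rightarrow> real" where
  "hs_norm s f = sqrt (enn2real (hs_sq s f))"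

definition hs_inner :: "real \<Rightarrow> (real^'d::finite \<Rightarrow> real) \<Rightarrow> (real^'d \<Rightarrow> real) \<Rightarrow> real" where
  "hs_inner s f g = (\<Sum>\<^sub>\<infinity>k. (1 + 4 * pi^2 * knorm2 k) powr s * Re (fc f k * cnj (fc g k)))"

definition Jeps :: "real \<Rightarrow> (real^'d::finite \<Rightarrow> real) \<Rightarrow> real^'d \<Rightarrow> real" where
  "Jeps eps f x = Re (\<Sum>\<^sub>\<infinity>k. complex_of_real (exp (- eps * knorm2 k)) * cis (2 * pi * kdot k x) * fc f k)"

definition Jlap :: "real \<Rightarrow> (real^'d::finite \<Rightarrow> real) \<Rightarrow> real^'d \<Rightarrow> real" where
  "Jlap eps f x = Re (\<Sum>\<^sub>\<infinity>k. complex_of_real (exp (- eps * knorm2 k) * (- 4 * pi^2 * knorm2 k))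
                        * cis (2 * pi * kdot k x) * fc f k)"

fun dpart :: "'a::euclidean_space list \<Rightarrow> ('a \<Rightarrow> real) \<Rightarrow> 'a \<Rightarrow> real" where
  "dpart [] f = f"
| "dpart (b # bs) f = (\<lambda>x. deriv (\<lambda>s. dpart bs f (x + s *\<^sub>R b)) 0)"

definition smooth_bdd :: "('a::euclidean_space \<Rightarrow> real) \<Rightarrow> bool" where
  "smooth_bdd f \<longleftrightarrow> (\<forall>bs. set bs \<subseteq> Basis \<longrightarrow>
      (\<forall>x. dpart bs f differentiable (at x)) \<and> bounded (range (dpart bs f)))"

definition periodic1 :: "('a::euclidean_space \<Rightarrow> real) \<Rightarrow> bool" where
  "periodic1 f \<longleftrightarrow> (\<forall>x. \<forall>b\<in>Basis. f (x + b) = f x)"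

definition Mfun :: "real \<Rightarrow> real \<Rightarrow> real \<Rightarrow> real" where
  "Mfun um rt r = um * r / (1 + r / rt)"

definition ufun :: "real \<Rightarrow> real \<Rightarrow> real \<Rightarrow> real \<Rightarrow> real \<Rightarrow> real" where
  "ufun up um rt k r = up - k * um / (1 + r / rt)"

definition Iop :: "((real^'d) \<times> (real^'d) \<Rightarrow> real) \<Rightarrow> (real^'d::finite \<Rightarrow> real) \<Rightarrow> real^'d \<Rightarrow> real" where
  "Iop tau q x = integral\<^sup>L tmeas (\<lambda>y. tau (y, x) * q y)"

definition rhs :: "real \<Rightarrow> real \<Rightarrow> real \<Rightarrow> real \<Rightarrow> (real^'d \<Rightarrow> real) \<Rightarrow> (real^'d \<Rightarrow> real)
   \<Rightarrow> (real^'d \<Rightarrow> real) \<Rightarrow> (real^'d \<Rightarrow> real) \<Rightarrow> ((real^'d) \<times> (real^'d) \<Rightarrow> real)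
   \<Rightarrow> real \<Rightarrow> (real^'d::finite \<Rightarrow> real) \<Rightarrow> real^'d \<Rightarrow> real" where
  "rhs delta up um rt kap eta om gam tau eps rho x =
     delta * Jlap eps (\<lambda>y. up * Jeps eps rho y - kap y * Mfun um rt (Jeps eps rho y)) x
     + eta x - om x * rho x
     + Iop tau (\<lambda>y. gam y * rho y * ufun up um rt (kap y) (rho y)) x
     - gam x * rho x * ufun up um rt (kap x) (rho x)"

text \<open>g belongs to L^2([0,T]; H^m): Fourier coefficients measurable in t (weak = strong
 measurability in a separable Hilbert space), a.e. in L^2 of the torus, and finite L^2-in-time norm.\<close>
definition L2Hs :: "real \<Rightarrow> real \<Rightarrow> (real \<Rightarrow> real^'d::finite \<Rightarrow> real) \<Rightarrow> bool" where
  "L2Hs T s g \<longleftrightarrow> (\<forall>k. (\<lambda>t. fc (g t) k) \<in> borel_measurable (lebesgue_on {0..T}))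
     \<and> (AE t in lebesgue_on {0..T}. in_L2 (g t))
     \<and> (\<integral>\<^sup>+ t. hs_sq s (g t) \<partial>(lebesgue_on {0..T})) < \<infinity>"

end

theory Submission
  imports Defs
begin

text \<open>The energy estimate gives \<open>\<parallel>\<rho>\<^sup>*(t)\<parallel>\<^sup>2 \<le> 2 E(t)\<close> by lower semicontinuity of the
  \<open>H\<^sup>m\<close> norm under coefficientwise convergence, hence \<open>limsup\<^sub>t\<^sub>\<down>\<^sub>0 \<parallel>\<rho>\<^sup>*(t)\<parallel>\<^sup>2 \<le> 2 E(0) = \<parallel>\<rho>\<^sub>0\<parallel>\<^sup>2\<close>.
  Conversely, convergence in \<open>H\<^sup>m\<^sup>'\<close> is uniform in time, so every Fourier coefficient of \<open>\<rho>\<^sup>*\<close>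
  is a uniform limit of continuous functions and hence continuous at \<open>t = 0\<close>, where it equals
  the coefficient of \<open>\<rho>\<^sub>0\<close>; lower semicontinuity once more gives
  \<open>liminf\<^sub>t\<^sub>\<down>\<^sub>0 \<parallel>\<rho>\<^sup>*(t)\<parallel>\<^sup>2 \<ge> \<parallel>\<rho>\<^sub>0\<parallel>\<^sup>2\<close>.\<close>

lemma finite_measure_tmeas: "finite_measure tmeas"
  unfolding tmeas_def tcube_def by (rule finite_measure_lebesgue_on) simp

lemma integrable_fc_integrand:
  assumes "in_L2 f"
  shows "integrable tmeas (\<lambda>x. complex_of_real (f x) * cis (- 2 * pi * kdot k x))"
proof -
  have f_meas [measurable]: "f \<in> borel_measurable tmeas"
    using assms unfolding in_L2_def by auto
  have cis_meas: "(\<lambda>x. cis (- 2 * pi * kdot k x)) \<in> borel_measurable tmeas"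
    unfolding tmeas_def tcube_def kdot_def
    by (rule continuous_imp_measurable_on_sets_lebesgue) (auto intro!: continuous_intros)
  have "integrable tmeas f"
    using finite_measure.square_integrable_imp_integrable[OF finite_measure_tmeas f_meas] assms
    unfolding in_L2_def by auto
  then show ?thesis
    by (rule Bochner_Integration.integrable_bound) (use cis_meas in \<open>auto simp: norm_mult\<close>)
qed

lemma fc_diff:
  assumes "in_L2 f" "in_L2 g"
  shows "fc (\<lambda>x. f x - g x) k = fc f k - fc g k"
  unfolding fc_def
  using Bochner_Integration.integral_diff[OF integrable_fc_integrand[OF assms(1)]
      integrable_fc_integrand[OF assms(2)]]
  by (simp add: algebra_simps)

definition hs_term :: "real \<Rightarrow> (real^'d::finite \<Rightarrow> real) \<Rightarrow> ('d \<Rightarrow> int) \<Rightarrow> real" where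
  "hs_term s f k = (1 + 4 * pi^2 * knorm2 k) powr s * (cmod (fc f k))^2"

lemma one_le_fourier_weight: "1 \<le> 1 + 4 * pi^2 * knorm2 k"
  unfolding knorm2_def by (simp add: sum_nonneg)

lemma hs_term_nonneg: "hs_term s f k \<ge> 0"
  unfolding hs_term_def by simp

lemma hs_term_mono: "s' \<le> s \<Longrightarrow> hs_term s' f k \<le> hs_term s f k"
  unfolding hs_term_def by (rule mult_right_mono[OF powr_mono[OF _ one_le_fourier_weight]]) auto

lemma hs_sq_eq_SUP_sum: "hs_sq s f = (SUP F\<in>{F. finite F}. ennreal (sum (hs_term s f) F))"
proof -
  have "hs_sq s f = (SUP F\<in>{F. finite F \<and> F \<subseteq> UNIV}. sum (\<lambda>k. ennreal (hs_term s f k)) F)"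
    unfolding hs_sq_def hs_term_def by (rule nonneg_infsum_complete) simp
  also have "\<dots> = (SUP F\<in>{F. finite F}. ennreal (sum (hs_term s f) F))"
    by (intro SUP_cong refl) (auto simp: sum_ennreal hs_term_nonneg)
  finally show ?thesis .
qed

lemma hs_norm_sq: "(hs_norm s f)^2 = enn2real (hs_sq s f)"
  unfolding hs_norm_def by simp

lemma hs_norm_nonneg: "hs_norm s f \<ge> 0"
  unfolding hs_norm_def by simp

lemma sum_hs_term_le_hs_norm_sq:
  assumes "finite F" "hs_sq s f < \<infinity>"
  shows "sum (hs_term s f) F \<le> (hs_norm s f)^2"
proof -
  have "ennreal (sum (hs_term s f) F) \<le> hs_sq s f"
    unfolding hs_sq_eq_SUP_sum by (rule SUP_upper) (simp add: assms(1))
  then have "enn2real (ennreal (sum (hs_term s f) F)) \<le> enn2real (hs_sq s f)"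
    by (rule enn2real_mono) (use assms(2) in simp)
  then show ?thesis
    by (simp add: hs_norm_sq sum_nonneg hs_term_nonneg)
qed

lemma hs_sq_finite_if_sums_bounded:
  assumes "\<And>F. finite F \<Longrightarrow> sum (hs_term s f) F \<le> B"
  shows "hs_sq s f < \<infinity>" "(hs_norm s f)^2 \<le> B"
proof -
  have le: "hs_sq s f \<le> ennreal B"
    unfolding hs_sq_eq_SUP_sum by (rule SUP_least) (auto intro: ennreal_leI assms)
  then show "hs_sq s f < \<infinity>"
    using le_less_trans by fastforce
  have "B \<ge> 0" using assms[of "{}"] by simp
  with enn2real_mono[OF le] show "(hs_norm s f)^2 \<le> B"
    by (simp add: hs_norm_sq)
qed

lemma sum_hs_term_approx_hs_norm_sq:
  assumes "hs_sq s f < \<infinity>" "a < (hs_norm s f)^2"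
  obtains F where "finite F" "a < sum (hs_term s f) F"
proof (cases "a < 0")
  case True
  then show ?thesis by (intro that[of "{}"]) auto
next
  case False
  have "ennreal a < ennreal (enn2real (hs_sq s f))"
    using False assms(2) by (subst ennreal_less_iff) (auto simp: hs_norm_sq)
  also have "\<dots> = hs_sq s f"
    using assms(1) by (simp add: ennreal_enn2real_if)
  finally obtain F where "finite F" "ennreal a < ennreal (sum (hs_term s f) F)"
    unfolding hs_sq_eq_SUP_sum less_SUP_iff by auto
  then show ?thesis
    using False by (intro that) (auto simp: ennreal_less_iff)
qed

lemma in_Hs_mono:
  assumes "in_Hs s f" "s' \<le> s"
  shows "in_Hs s' f"
proof -
  have fin: "hs_sq s f < \<infinity>" using assms(1) unfolding in_Hs_def by simp
  have "sum (hs_term s' f) F \<le> (hs_norm s f)^2" if "finite F" for F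
    using sum_mono[of F "hs_term s' f" "hs_term s f"] hs_term_mono[OF assms(2)]
      sum_hs_term_le_hs_norm_sq[OF that fin] by fastforce
  then have "hs_sq s' f < \<infinity>" by (rule hs_sq_finite_if_sums_bounded(1))
  then show ?thesis using assms(1) unfolding in_Hs_def by simp
qed

lemma norm_fc_le_hs_norm:
  assumes "hs_sq s f < \<infinity>" "s \<ge> 0"
  shows "cmod (fc f k) \<le> hs_norm s f"
proof -
  have "1 \<le> (1 + 4 * pi^2 * knorm2 k) powr s"
    by (rule ge_one_powr_ge_zero[OF one_le_fourier_weight assms(2)])
  then have "(cmod (fc f k))^2 \<le> hs_term s f k"
    unfolding hs_term_def using mult_right_mono[of 1 _ "(cmod (fc f k))^2"] by simp
  also have "\<dots> \<le> (hs_norm s f)^2"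
    using sum_hs_term_le_hs_norm_sq[of "{k}" s f] assms(1) by simp
  finally show ?thesis
    using hs_norm_nonneg power2_le_imp_le by blast
qed

lemma hs_sq_diff_finite:
  fixes f g :: "real^'d::finite \<Rightarrow> real"
  assumes "in_Hs s f" "in_Hs s g"
  shows "hs_sq s (\<lambda>x. f x - g x) < \<infinity>"
proof (rule hs_sq_finite_if_sums_bounded(1))
  have L2: "in_L2 f" "in_L2 g" and fin: "hs_sq s f < \<infinity>" "hs_sq s g < \<infinity>"
    using assms unfolding in_Hs_def by auto
  have term_le: "hs_term s (\<lambda>x. f x - g x) k \<le> 2 * hs_term s f k + 2 * hs_term s g k" for k
  proof -
    have "(cmod (fc f k - fc g k))^2 \<le> (cmod (fc f k) + cmod (fc g k))^2"
      by (intro power_mono norm_triangle_ineq4) auto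
    also have "\<dots> \<le> 2 * (cmod (fc f k))^2 + 2 * (cmod (fc g k))^2"
      using zero_le_power2[of "cmod (fc f k) - cmod (fc g k)"]
      by (simp add: power2_diff power2_sum)
    finally have "(1 + 4 * pi^2 * knorm2 k) powr s * (cmod (fc f k - fc g k))^2
        \<le> (1 + 4 * pi^2 * knorm2 k) powr s * (2 * (cmod (fc f k))^2 + 2 * (cmod (fc g k))^2)"
      by (rule mult_left_mono) simp
    then show ?thesis
      unfolding hs_term_def fc_diff[OF L2] by (simp add: algebra_simps)
  qed
  fix F :: "('d \<Rightarrow> int) set" assume "finite F"
  have "sum (hs_term s (\<lambda>x. f x - g x)) F
      \<le> sum (\<lambda>k. 2 * hs_term s f k + 2 * hs_term s g k) F"
    by (intro sum_mono term_le)
  also have "\<dots> = 2 * sum (hs_term s f) F + 2 * sum (hs_term s g) F"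
    by (simp add: sum.distrib sum_distrib_left)
  also have "\<dots> \<le> 2 * (hs_norm s f)^2 + 2 * (hs_norm s g)^2"
    using sum_hs_term_le_hs_norm_sq[OF \<open>finite F\<close> fin(1)]
      sum_hs_term_le_hs_norm_sq[OF \<open>finite F\<close> fin(2)] by linarith
  finally show "sum (hs_term s (\<lambda>x. f x - g x)) F \<le> 2 * (hs_norm s f)^2 + 2 * (hs_norm s g)^2" .
qed

lemma norm_fc_diff_le_hs_norm_diff:
  assumes "in_Hs s f" "in_Hs s g" "s \<ge> 0"
  shows "cmod (fc f k - fc g k) \<le> hs_norm s (\<lambda>x. f x - g x)"
  using norm_fc_le_hs_norm[OF hs_sq_diff_finite[OF assms(1,2)] assms(3), of k] assms(1,2)
  by (simp add: fc_diff in_Hs_def)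

lemma hs_norm_sq_le_of_fc_tendsto:
  fixes f :: "'a \<Rightarrow> real^'d::finite \<Rightarrow> real"
  assumes fc_lim: "\<And>k. ((\<lambda>n. fc (f n) k) \<longlongrightarrow> fc g k) F"
    and bound: "\<forall>\<^sub>F n in F. hs_sq s (f n) < \<infinity> \<and> (hs_norm s (f n))^2 \<le> B"
    and "F \<noteq> bot"
  shows "hs_sq s g < \<infinity>" "(hs_norm s g)^2 \<le> B"
proof -
  have "sum (hs_term s g) K \<le> B" if "finite K" for K
  proof (rule tendsto_upperbound)
    show "((\<lambda>n. sum (hs_term s (f n)) K) \<longlongrightarrow> sum (hs_term s g) K) F"
      unfolding hs_term_def by (intro tendsto_intros fc_lim)
    show "\<forall>\<^sub>F n in F. sum (hs_term s (f n)) K \<le> B"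
      using bound by eventually_elim (meson order_trans sum_hs_term_le_hs_norm_sq[OF that])
  qed (use \<open>F \<noteq> bot\<close> in simp)
  then show "hs_sq s g < \<infinity>" "(hs_norm s g)^2 \<le> B"
    by (blast intro: hs_sq_finite_if_sums_bounded)+
qed

text \<open>The liminf half uses coefficientwise convergence alone, through finite partial sums of
  the Fourier series; the limsup half is the hypothesis on \<open>U\<close>.\<close>

lemma hs_norm_tendsto_of_fc_tendsto:
  fixes g :: "'a \<Rightarrow> real^'d::finite \<Rightarrow> real"
  assumes fc_lim: "\<And>k. ((\<lambda>t. fc (g t) k) \<longlongrightarrow> fc g0 k) F"
    and fin0: "hs_sq s g0 < \<infinity>"
    and bound: "\<forall>\<^sub>F t in F. hs_sq s (g t) < \<infinity> \<and> (hs_norm s (g t))^2 \<le> U t"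
    and U_lim: "(U \<longlongrightarrow> (hs_norm s g0)^2) F"
  shows "((\<lambda>t. hs_norm s (g t)) \<longlongrightarrow> hs_norm s g0) F"
proof -
  have "((\<lambda>t. (hs_norm s (g t))^2) \<longlongrightarrow> (hs_norm s g0)^2) F"
  proof (rule order_tendstoI)
    fix a assume "a < (hs_norm s g0)^2"
    then obtain K where K: "finite K" "a < sum (hs_term s g0) K"
      using sum_hs_term_approx_hs_norm_sq[OF fin0] by blast
    have "((\<lambda>t. sum (hs_term s (g t)) K) \<longlongrightarrow> sum (hs_term s g0) K) F"
      unfolding hs_term_def by (intro tendsto_intros fc_lim)
    from order_tendstoD(1)[OF this K(2)] bound
    show "\<forall>\<^sub>F t in F. a < (hs_norm s (g t))^2"
      by eventually_elim (meson less_le_trans sum_hs_term_le_hs_norm_sq[OF K(1)])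
  next
    fix a assume "(hs_norm s g0)^2 < a"
    from order_tendstoD(2)[OF U_lim this] bound
    show "\<forall>\<^sub>F t in F. (hs_norm s (g t))^2 < a"
      by eventually_elim auto
  qed
  from tendsto_real_sqrt[OF this] show ?thesis
    by (simp add: hs_norm_nonneg)
qed

lemma fc_tendsto_of_hs_norm_diff_tendsto:
  assumes "s \<ge> 0" "\<forall>\<^sub>F t in F. in_Hs s (f t)" "in_Hs s g"
    and "((\<lambda>t. hs_norm s (\<lambda>x. f t x - g x)) \<longlongrightarrow> 0) F"
  shows "((\<lambda>t. fc (f t) k) \<longlongrightarrow> fc g k) F"
proof (rule LIM_zero_cancel, rule Lim_null_comparison[OF _ assms(4)])
  show "\<forall>\<^sub>F t in F. norm (fc (f t) k - fc g k) \<le> hs_norm s (\<lambda>x. f t x - g x)"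
    using assms(2) by eventually_elim (rule norm_fc_diff_le_hs_norm_diff[OF _ assms(3,1)])
qed

lemma uniform_limit_fc_of_hs_norm_diff_bound:
  assumes "s \<ge> 0" "\<And>n t. t \<in> S \<Longrightarrow> in_Hs s (f n t)" "\<And>t. t \<in> S \<Longrightarrow> in_Hs s (g t)"
    and "C \<longlonglongrightarrow> 0" "\<And>n t. t \<in> S \<Longrightarrow> hs_norm s (\<lambda>x. f n t x - g t x) \<le> C n"
  shows "uniform_limit S (\<lambda>n t. fc (f n t) k) (\<lambda>t. fc (g t) k) sequentially"
proof (rule uniform_limitI)
  fix e :: real assume "e > 0"
  from order_tendstoD(2)[OF assms(4) this]
  show "\<forall>\<^sub>F n in sequentially. \<forall>t\<in>S. dist (fc (f n t) k) (fc (g t) k) < e"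
  proof eventually_elim
    case (elim n)
    show ?case
    proof
      fix t assume "t \<in> S"
      have "cmod (fc (f n t) k - fc (g t) k) \<le> C n"
        using norm_fc_diff_le_hs_norm_diff[OF assms(2,3)[OF \<open>t \<in> S\<close>] assms(1)]
          assms(5)[OF \<open>t \<in> S\<close>] by (rule order_trans)
      with elim show "dist (fc (f n t) k) (fc (g t) k) < e"
        by (simp add: dist_norm)
    qed
  qed
qed

lemma fc_tendsto_within_of_uniform_limit:
  assumes unif: "uniform_limit S (\<lambda>n t. fc (f n t) k) (\<lambda>t. fc (g t) k) sequentially"
    and "a \<in> S" "s \<ge> 0" "\<And>n t. t \<in> S \<Longrightarrow> in_Hs s (f n t)"
    and cont: "\<And>n. ((\<lambda>t. hs_norm s (\<lambda>x. f n t x - f n a x)) \<longlongrightarrow> 0) (at a within S)"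
  shows "((\<lambda>t. fc (g t) k) \<longlongrightarrow> fc (g a) k) (at a within S)"
proof (rule swap_uniform_limit[OF _ tendsto_uniform_limitI[OF unif \<open>a \<in> S\<close>] unif])
  have f_Hs: "\<forall>\<^sub>F t in at a within S. in_Hs s (f n t)" for n
    by (simp add: eventually_at_filter assms(4))
  show "\<forall>\<^sub>F n in sequentially. ((\<lambda>t. fc (f n t) k) \<longlongrightarrow> fc (f n a) k) (at a within S)"
    by (intro always_eventually allI)
      (rule fc_tendsto_of_hs_norm_diff_tendsto[OF \<open>s \<ge> 0\<close> f_Hs assms(4)[OF \<open>a \<in> S\<close>] cont])
qed simp

lemma hs_norm_tendsto_at_right_of_approximations:
  fixes f :: "nat \<Rightarrow> real \<Rightarrow> real^'d::finite \<Rightarrow> real" and g :: "real \<Rightarrow> real^'d \<Rightarrow> real"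
  assumes "T > 0" "0 \<le> s'" "s' \<le> s"
    and f_Hs: "\<And>n t. t \<in> {0..T} \<Longrightarrow> in_Hs s (f n t)"
    and f_cont: "\<And>n. ((\<lambda>t. hs_norm s (\<lambda>x. f n t x - f n 0 x)) \<longlongrightarrow> 0) (at_right 0)"
    and f_init: "\<And>n. hs_norm s (\<lambda>x. f n 0 x - g0 x) = 0" and g0_Hs: "in_Hs s g0"
    and energy: "\<And>n t. t \<in> {0..T} \<Longrightarrow> (hs_norm s (f n t))^2 \<le> U t"
    and U_lim: "(U \<longlongrightarrow> (hs_norm s g0)^2) (at_right 0)"
    and g_Hs': "\<And>t. t \<in> {0..T} \<Longrightarrow> in_Hs s' (g t)"
    and "C \<longlonglongrightarrow> 0" and C: "\<And>n t. t \<in> {0..T} \<Longrightarrow> hs_norm s' (\<lambda>x. f n t x - g t x) \<le> C n"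
  shows "in_Hs s (g 0)" "\<forall>\<^sub>F t in at_right 0. in_Hs s (g t)"
    "((\<lambda>t. hs_norm s (g t)) \<longlongrightarrow> hs_norm s g0) (at_right 0)" "hs_norm s (g 0) = hs_norm s g0"
proof -
  have T0: "0 \<in> {0..T}"
    using \<open>T > 0\<close> by simp
  have at_right_0: "at_right 0 = at 0 within {0..T}"
    using at_within_Icc_at_right[OF \<open>T > 0\<close>] by simp
  have in_T: "\<forall>\<^sub>F t in at_right 0. t \<in> {0..T}"
    unfolding at_right_0 by (simp add: eventually_at_filter)
  have fc_unif: "uniform_limit {0..T} (\<lambda>n t. fc (f n t) k) (\<lambda>t. fc (g t) k) sequentially" for k
    using in_Hs_mono[OF f_Hs \<open>s' \<le> s\<close>]
    by (intro uniform_limit_fc_of_hs_norm_diff_bound[OF \<open>0 \<le> s'\<close> _ g_Hs' \<open>C \<longlonglongrightarrow> 0\<close> C])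
  have g_Hs: "in_Hs s (g t)" and g_energy: "(hs_norm s (g t))^2 \<le> U t" if "t \<in> {0..T}" for t
  proof -
    have "\<forall>\<^sub>F n in sequentially. hs_sq s (f n t) < \<infinity> \<and> (hs_norm s (f n t))^2 \<le> U t"
      using f_Hs[OF that] energy[OF that] by (simp add: in_Hs_def)
    note lsc = hs_norm_sq_le_of_fc_tendsto[OF tendsto_uniform_limitI[OF fc_unif that] this sequentially_bot]
    show "in_Hs s (g t)"
      using lsc(1) g_Hs'[OF that] by (simp add: in_Hs_def)
    show "(hs_norm s (g t))^2 \<le> U t"
      by (rule lsc(2))
  qed
  have "fc (g 0) k = fc g0 k" for k
  proof (rule LIMSEQ_unique[OF tendsto_uniform_limitI[OF fc_unif T0]])
    have "fc (f n 0) k = fc g0 k" for n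
      using norm_fc_diff_le_hs_norm_diff[OF f_Hs[OF T0] g0_Hs, where k=k] f_init
      using \<open>0 \<le> s'\<close> \<open>s' \<le> s\<close> by simp
    then show "(\<lambda>n. fc (f n 0) k) \<longlonglongrightarrow> fc g0 k"
      by simp
  qed
  then show norm_g0: "hs_norm s (g 0) = hs_norm s g0"
    unfolding hs_norm_def hs_sq_def by simp
  have fc_cont: "((\<lambda>t. fc (g t) k) \<longlongrightarrow> fc (g 0) k) (at_right 0)" for k
    using f_cont \<open>0 \<le> s'\<close> \<open>s' \<le> s\<close> unfolding at_right_0
    by (intro fc_tendsto_within_of_uniform_limit[OF fc_unif T0 _ f_Hs]) simp_all
  have "\<forall>\<^sub>F t in at_right 0. hs_sq s (g t) < \<infinity> \<and> (hs_norm s (g t))^2 \<le> U t"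
    using in_T by (rule eventually_mono) (use g_Hs g_energy in \<open>auto simp: in_Hs_def\<close>)
  then show "((\<lambda>t. hs_norm s (g t)) \<longlongrightarrow> hs_norm s g0) (at_right 0)"
    using g_Hs[OF T0] U_lim unfolding norm_g0[symmetric] in_Hs_def
    by (intro hs_norm_tendsto_of_fc_tendsto[OF fc_cont]) auto
  show "in_Hs s (g 0)"
    using g_Hs[OF T0] .
  show "\<forall>\<^sub>F t in at_right 0. in_Hs s (g t)"
    using in_T by (rule eventually_mono) (rule g_Hs)
qed

theorem lemma4p13:
  fixes kap eta om gam :: "real^'d::finite \<Rightarrow> real"
    and tau :: "(real^'d) \<times> (real^'d) \<Rightarrow> real"
    and delta up um rt :: real
    and m :: nat and m' :: real
    and rho0 :: "real^'d \<Rightarrow> real" and rho0_low :: real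
    and rho :: "real \<Rightarrow> real \<Rightarrow> real^'d \<Rightarrow> real"
    and T :: real and E :: "real \<Rightarrow> real"
    and epsn :: "nat \<Rightarrow> real" and rhos :: "real \<Rightarrow> real^'d \<Rightarrow> real"
  assumes data_smooth: "smooth_bdd kap" "smooth_bdd eta" "smooth_bdd om" "smooth_bdd gam" "smooth_bdd tau"
    and data_periodic: "periodic1 kap" "periodic1 eta" "periodic1 om" "periodic1 gam" "periodic1 tau"
    and kap_bounds: "\<forall>x. 0 \<le> kap x \<and> kap x \<le> 1"
    and data_nonneg: "\<forall>x. eta x \<ge> 0 \<and> om x \<ge> 0 \<and> gam x \<ge> 0" "\<forall>p. tau p \<ge> 0"
    and tau_int: "\<forall>y. integral\<^sup>L tmeas (\<lambda>x. tau (y, x)) = 1"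
    and params: "delta > 0" "0 < um" "um < up" "up < 1" "rt > 0"
    and m_gt: "real m > real CARD('d) + 3"
    and rho0_Hm: "in_Hs (real m) rho0"
    and rho0_essinf: "AE x in tmeas. rho0 x \<ge> rho0_low"
       "\<forall>c > rho0_low. \<not> (AE x in tmeas. rho0 x \<ge> c)" "rho0_low > 0"
    and T_pos: "T > 0"
    and sol_Hm: "\<forall>eps>0. \<forall>t\<in>{0..T}. in_Hs (real m) (rho eps t)"
    and sol_cont: "\<forall>eps>0. \<forall>t\<in>{0..T}.
          ((\<lambda>s. hs_norm (real m) (\<lambda>x. rho eps s x - rho eps t x)) \<longlongrightarrow> 0) (at t within {0..T})"
    and sol_rhs_Hm: "\<forall>eps>0. \<forall>t\<in>{0..T}.
          in_Hs (real m) (rhs delta up um rt kap eta om gam tau eps (rho eps t))"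
    and sol_deriv: "\<forall>eps>0. \<forall>t\<in>{0..T}.
          ((\<lambda>h. hs_norm (real m) (\<lambda>x. (rho eps (t + h) x - rho eps t x) / h
              - rhs delta up um rt kap eta om gam tau eps (rho eps t) x)) \<longlongrightarrow> 0)
          (at 0 within {h. t + h \<in> {0..T}})"
    and sol_deriv_cont: "\<forall>eps>0. \<forall>t\<in>{0..T}.
          ((\<lambda>s. hs_norm (real m) (\<lambda>x. rhs delta up um rt kap eta om gam tau eps (rho eps s) x
              - rhs delta up um rt kap eta om gam tau eps (rho eps t) x)) \<longlongrightarrow> 0) (at t within {0..T})"
    and sol_init: "\<forall>eps>0. hs_norm (real m) (\<lambda>x. rho eps 0 x - rho0 x) = 0"
    and sol_bdd: "\<exists>B. \<forall>eps>0. \<forall>t\<in>{0..T}. hs_norm (real m) (rho eps t) \<le> B"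
    and sol_lower: "\<forall>eps>0. \<forall>t\<in>{0..T}. AE x in tmeas. rho eps t x \<ge> rho0_low / 2"
    and E_cont: "continuous_on {0..T} E"
    and E_init: "E 0 = (hs_norm (real m) rho0)^2 / 2"
    and energy: "\<forall>eps>0. \<forall>t\<in>{0..T}. (hs_norm (real m) (rho eps t))^2 / 2 \<le> E t"
    and epsn: "\<forall>n. epsn n > 0" "decseq epsn" "epsn \<longlonglongrightarrow> 0"
    and m'_range: "real CARD('d) / 2 < m'" "m' < real m"
    and rhos_L2: "L2Hs T (real m) rhos"
    and weak_conv: "\<forall>g. L2Hs T (real m) g \<longrightarrow>
          (\<lambda>n. LINT t:{0..T}|lborel. hs_inner (real m) (rho (epsn n) t) (g t))
            \<longlonglongrightarrow> (LINT t:{0..T}|lborel. hs_inner (real m) (rhos t) (g t))"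
    and strong_conv: "\<forall>t\<in>{0..T}. in_Hs m' (rhos t)"
       "\<exists>C. C \<longlonglongrightarrow> 0 \<and> (\<forall>n. \<forall>t\<in>{0..T}.
            hs_norm m' (\<lambda>x. rho (epsn n) t x - rhos t x) \<le> C n)"
  shows "in_Hs (real m) (rhos 0) \<and> (\<forall>\<^sub>F t in at_right 0. in_Hs (real m) (rhos t))
     \<and> ((\<lambda>t. hs_norm (real m) (rhos t)) \<longlongrightarrow> hs_norm (real m) rho0) (at_right 0)
     \<and> hs_norm (real m) (rhos 0) = hs_norm (real m) rho0"
proof -
  have eps_pos: "epsn n > 0" for n
    using epsn(1) by blast
  have at_right_0: "at_right 0 = at 0 within {0..T}"
    using at_within_Icc_at_right[OF T_pos] by simp
  obtain C where "C \<longlonglongrightarrow> 0"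
    and C: "\<And>n t. t \<in> {0..T} \<Longrightarrow> hs_norm m' (\<lambda>x. rho (epsn n) t x - rhos t x) \<le> C n"
    using strong_conv(2) by blast
  have "(E \<longlongrightarrow> E 0) (at_right 0)"
    using E_cont T_pos unfolding at_right_0 continuous_on_def by simp
  then have "((\<lambda>t. 2 * E t) \<longlongrightarrow> (hs_norm (real m) rho0)^2) (at_right 0)"
    using E_init by (auto intro: tendsto_eq_intros)
  note approx = hs_norm_tendsto_at_right_of_approximations[where f = "\<lambda>n. rho (epsn n)",
      OF T_pos _ _ _ _ _ rho0_Hm _ this _ \<open>C \<longlonglongrightarrow> 0\<close> C]
  have "(hs_norm (real m) (rho (epsn n) t))^2 \<le> 2 * E t" if "t \<in> {0..T}" for n t
    using energy[rule_format, OF eps_pos that] by (simp add: mult.commute)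
  with approx show ?thesis
    using m'_range sol_Hm sol_cont sol_init eps_pos strong_conv(1) T_pos unfolding at_right_0
    by simp
qed

end
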